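(* Let $(\mathcal{V},\mathcal{I})$ be a finite connected graph with vertex set $\mathcal{V}$ and set of unoriented edges $\mathcal{I}$ (each pair of vertices joined by at most one edge), with $N$ edges, each edge $(i,j)$ having length $L_{ij}>0$. Let $(S_i)_{i\in\mathcal{V}}$ satisfy $\sum_{i\in\mathcal{V}}S_i=0$, and let $\nu>0$ and $0<\gamma<1$. For a vector of conductivities $C=(C_{ij})\in\mathbb{R}^N_+$, let pressures $(P_i)_{i\in\mathcal{V}}$ solve the Kirchhoff law $$\sum_{j\in N(i)} C_{ij}\frac{P_i-P_j}{L_{ij}}=S_i\quad\text{for all }i\in\mathcal{V},$$ and define fluxes $Q_{ij}[C]=C_{ij}\frac{P_i-P_j}{L_{ij}}$, and the energy $$E[C]=\sum_{(i,j)\in\mathcal{I},\,i<j}\Big(\frac{Q_{ij}[C]^2}{C_{ij}}+\frac{\nu}{\gamma}C_{ij}^\gamma\Big)L_{ij}.$$ Then the global minimizer $C\in\mathbb{R}^N_+$ of $E$ constrained by the Kirchhoff law contains no loops, i.e., there exists no closed circle of edges $\{(i_1,i_2),(i_2,i_3),\dots,(i_K,i_1)\}\subset\mathcal{I}$ such that the fluxes $Q_{i_1i_2},Q_{i_2i_3},\dots,Q_{i_Ki_1}$ are all nonzero.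
   Context: $N(i)$ denotes the set of neighbours of vertex $i$. Fluxes are oriented: $Q_{ij}=-Q_{ji}$. The sum over $i<j$ counts each unoriented edge once. For a given $C$, the Kirchhoff system is solvable (uniquely up to an additive constant) when the graph formed by edges with positive conductivity is connected. *)

theory Defs
  imports Complex_Main
begin

definition simple_graph :: "'v set \<Rightarrow> ('v \<Rightarrow> 'v \<Rightarrow> bool) \<Rightarrow> bool" where
  "simple_graph V E \<longleftrightarrow> finite V \<and> (\<forall>i j. E i j \<longrightarrow> i \<in> V \<and> j \<in> V \<and> i \<noteq> j \<and> E j i)"

definition connected_graph :: "'v set \<Rightarrow> ('v \<Rightarrow> 'v \<Rightarrow> bool) \<Rightarrow> bool" where
  "connected_graph V E \<longleftrightarrow> V \<noteq> {} \<and> (\<forall>i\<in>V. \<forall>j\<in>V. E\<^sup>*\<^sup>* i j)"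

definition nbrs :: "'v set \<Rightarrow> ('v \<Rightarrow> 'v \<Rightarrow> bool) \<Rightarrow> 'v \<Rightarrow> 'v set" where
  "nbrs V E i = {j \<in> V. E i j}"

definition admissible_cond :: "('v \<Rightarrow> 'v \<Rightarrow> bool) \<Rightarrow> ('v \<Rightarrow> 'v \<Rightarrow> real) \<Rightarrow> bool" where
  "admissible_cond E C \<longleftrightarrow> (\<forall>i j. E i j \<longrightarrow> C i j \<ge> 0 \<and> C i j = C j i)"

definition flux :: "('v \<Rightarrow> 'v \<Rightarrow> real) \<Rightarrow> ('v \<Rightarrow> 'v \<Rightarrow> real) \<Rightarrow> ('v \<Rightarrow> real) \<Rightarrow> 'v \<Rightarrow> 'v \<Rightarrow> real" where
  "flux L C P i j = C i j * (P i - P j) / L i j"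

definition kirchhoff :: "'v set \<Rightarrow> ('v \<Rightarrow> 'v \<Rightarrow> bool) \<Rightarrow> ('v \<Rightarrow> 'v \<Rightarrow> real) \<Rightarrow> ('v \<Rightarrow> real)
    \<Rightarrow> ('v \<Rightarrow> 'v \<Rightarrow> real) \<Rightarrow> ('v \<Rightarrow> real) \<Rightarrow> bool" where
  "kirchhoff V E L S C P \<longleftrightarrow> (\<forall>i\<in>V. (\<Sum>j\<in>nbrs V E i. flux L C P i j) = S i)"

text \<open>Energy; each unoriented edge counted once via i < j. Note Q^2/C with C = 0 (then Q = 0) is 0.\<close>
definition energy :: "('v::linorder) set \<Rightarrow> ('v \<Rightarrow> 'v \<Rightarrow> bool) \<Rightarrow> ('v \<Rightarrow> 'v \<Rightarrow> real) \<Rightarrow> real \<Rightarrow> real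
    \<Rightarrow> ('v \<Rightarrow> 'v \<Rightarrow> real) \<Rightarrow> ('v \<Rightarrow> real) \<Rightarrow> real" where
  "energy V E L \<nu> \<gamma> C P = (\<Sum>(i,j)\<in>{(i,j). i \<in> V \<and> j \<in> V \<and> E i j \<and> i < j}.
       ((flux L C P i j)\<^sup>2 / C i j + \<nu> / \<gamma> * (C i j) powr \<gamma>) * L i j)"

definition is_cycle :: "('v \<Rightarrow> 'v \<Rightarrow> bool) \<Rightarrow> 'v list \<Rightarrow> bool" where
  "is_cycle E vs \<longleftrightarrow> length vs \<ge> 3 \<and> distinct vs \<and>
     (\<forall>k < length vs. E (vs ! k) (vs ! ((k + 1) mod length vs)))"

end

theory Submission
  imports Defs
begin

(*
  At the fixed pressures P of the minimiser the term Q_ij^2 / C_ij equals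
  C_ij (P_i - P_j)^2 / L_ij^2, so the energy is the sum of a linear and a strictly concave
  function of C, while the Kirchhoff law is linear in C. A cycle of nonzero fluxes carries a
  circulation D (equal to +1 or -1 along the cycle), and the direction
  delta_ij = D_ij L_ij / (P_i - P_j) changes every flux by D_ij, hence keeps the Kirchhoff law.
  Since the fluxes, and so the conductivities, are nonzero on the cycle, both C + t delta and
  C - t delta are admissible for small t > 0, and by strict concavity one of them has smaller
  energy than C.
*)

lemma powr_less_tangent:
  fixes g c y :: real
  assumes g: "0 < g" "g < 1" and pos: "0 < c" "0 < y" and "y \<noteq> c"
  shows "y powr g < c powr g + g * c powr (g - 1) * (y - c)"
proof -
  have deriv: "DERIV (\<lambda>x. x powr g) x :> g * x powr (g - 1)" if "0 < x" for x
    using that by (auto intro!: derivative_eq_intros)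
  consider "y < c" | "c < y" using \<open>y \<noteq> c\<close> by linarith
  then show ?thesis
  proof cases
    case 1
    obtain z where z: "y < z" "z < c" and mvt: "c powr g - y powr g = (c - y) * (g * z powr (g - 1))"
      using MVT2[OF 1 deriv] pos by fastforce
    have "c powr (g - 1) < z powr (g - 1)"
      using powr_less_mono2_neg[of "g - 1" z c] g z pos by simp
    then have "(c - y) * (g * c powr (g - 1)) < (c - y) * (g * z powr (g - 1))"
      using 1 g by simp
    then show ?thesis using mvt by (simp add: algebra_simps)
  next
    case 2
    obtain z where z: "c < z" "z < y" and mvt: "y powr g - c powr g = (y - c) * (g * z powr (g - 1))"
      using MVT2[OF 2 deriv] pos by fastforce
    have "z powr (g - 1) < c powr (g - 1)"
      using powr_less_mono2_neg[of "g - 1" c z] g z pos by simp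
    then have "(y - c) * (g * z powr (g - 1)) < (y - c) * (g * c powr (g - 1))"
      using 2 g by simp
    then show ?thesis using mvt by (simp add: algebra_simps)
  qed
qed

lemma powr_midpoint_strict_concave:
  fixes g c d :: real
  assumes "0 < g" "g < 1" "\<bar>d\<bar> < c" "d \<noteq> 0"
  shows "(c + d) powr g + (c - d) powr g < 2 * c powr g"
proof -
  have "0 < c" "0 < c + d" "0 < c - d" "c + d \<noteq> c" "c - d \<noteq> c" using assms by auto
  then show ?thesis
    using powr_less_tangent[of g c "c + d"] powr_less_tangent[of g c "c - d"] assms by argo
qed

lemma finite_ex_pos_scale_below:
  fixes d c :: "'a \<Rightarrow> real"
  assumes "finite A" and "\<forall>x\<in>A. d x \<noteq> 0 \<longrightarrow> 0 < c x"
  shows "\<exists>t>0. \<forall>x\<in>A. d x \<noteq> 0 \<longrightarrow> t * \<bar>d x\<bar> < c x"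
proof -
  have each: "\<forall>\<^sub>F t in at_right 0. d x \<noteq> 0 \<longrightarrow> t * \<bar>d x\<bar> < c x" if "x \<in> A" for x
  proof (cases "d x = 0")
    case False
    have "((\<lambda>t. t * \<bar>d x\<bar>) \<longlongrightarrow> 0 * \<bar>d x\<bar>) (at_right 0)"
      by (intro tendsto_intros tendsto_ident_at)
    then show ?thesis
      using order_tendstoD(2)[of _ 0 _ "c x"] assms(2) that False by (auto elim: eventually_mono)
  qed simp
  have "\<forall>\<^sub>F t in at_right 0. \<forall>x\<in>A. d x \<noteq> 0 \<longrightarrow> t * \<bar>d x\<bar> < c x"
    using each by (intro eventually_ball_finite[OF assms(1)]) simp
  then have "\<forall>\<^sub>F t in at_right 0. 0 < t \<and> (\<forall>x\<in>A. d x \<noteq> 0 \<longrightarrow> t * \<bar>d x\<bar> < c x)"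
    using eventually_at_right_less[of 0] by (simp add: eventually_conj_iff)
  then show ?thesis
    using eventually_happens'[OF trivial_limit_at_right_real] by blast
qed

lemma edge_energy_strict_midpoint_concave:
  fixes c d p l \<nu> \<gamma> :: real
  assumes "0 < l" "0 < \<nu>" "0 < \<gamma>" "\<gamma> < 1" "\<bar>d\<bar> < c" "d \<noteq> 0"
  defines "e x \<equiv> ((x * p / l)\<^sup>2 / x + \<nu> / \<gamma> * x powr \<gamma>) * l"
  shows "e (c + d) + e (c - d) < 2 * e c"
proof -
  have e_eq: "e x = x * (p\<^sup>2 / l) + \<nu> / \<gamma> * l * x powr \<gamma>" for x
    unfolding e_def using \<open>0 < l\<close> by (cases "x = 0") (simp_all add: field_simps power2_eq_square)
  have "0 < \<nu> / \<gamma> * l"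
    using assms by simp
  then have "\<nu> / \<gamma> * l * ((c + d) powr \<gamma> + (c - d) powr \<gamma>) < \<nu> / \<gamma> * l * (2 * c powr \<gamma>)"
    using powr_midpoint_strict_concave[of \<gamma> d c] assms by (intro mult_strict_left_mono)
  then show ?thesis
    unfolding e_eq by (simp only: distrib_left distrib_right left_diff_distrib) (simp add: mult.left_commute)
qed

lemma energy_strict_midpoint_concave:
  fixes V :: "('v::linorder) set"
  assumes "finite V" and L_pos: "\<forall>i j. E i j \<longrightarrow> L i j > 0"
    and "0 < \<nu>" "0 < \<gamma>" "\<gamma> < 1"
    and small: "\<forall>i j. E i j \<and> d i j \<noteq> 0 \<longrightarrow> \<bar>d i j\<bar> < C i j"
    and ab: "E a b" "a \<in> V" "b \<in> V" "a < b" "d a b \<noteq> 0"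
  shows "energy V E L \<nu> \<gamma> (\<lambda>i j. C i j + d i j) P + energy V E L \<nu> \<gamma> (\<lambda>i j. C i j - d i j) P
    < 2 * energy V E L \<nu> \<gamma> C P"
proof -
  define A where "A = {(i, j). i \<in> V \<and> j \<in> V \<and> E i j \<and> i < j}"
  define e where "e i j x = ((x * (P i - P j) / L i j)\<^sup>2 / x + \<nu> / \<gamma> * x powr \<gamma>) * L i j" for i j x
  have energy_eq: "energy V E L \<nu> \<gamma> C' P = (\<Sum>(i, j)\<in>A. e i j (C' i j))" for C'
    unfolding energy_def flux_def A_def e_def ..
  have "finite A"
    using \<open>finite V\<close> by (auto simp: A_def intro: finite_subset[of _ "V \<times> V"])
  have edge: "e i j (C i j + d i j) + e i j (C i j - d i j) < 2 * e i j (C i j)"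
    if "E i j" "d i j \<noteq> 0" for i j
    using edge_energy_strict_midpoint_concave[of "L i j" \<nu> \<gamma> "d i j" "C i j" "P i - P j"]
      that L_pos small assms(3-5) unfolding e_def by simp
  have "(\<Sum>(i, j)\<in>A. e i j (C i j + d i j) + e i j (C i j - d i j)) < (\<Sum>(i, j)\<in>A. 2 * e i j (C i j))"
  proof (rule sum_strict_mono_ex1[OF \<open>finite A\<close>])
    show "\<forall>x\<in>A. (case x of (i, j) \<Rightarrow> e i j (C i j + d i j) + e i j (C i j - d i j))
        \<le> (case x of (i, j) \<Rightarrow> 2 * e i j (C i j))"
      using edge by (fastforce simp: A_def)
    show "\<exists>x\<in>A. (case x of (i, j) \<Rightarrow> e i j (C i j + d i j) + e i j (C i j - d i j))
        < (case x of (i, j) \<Rightarrow> 2 * e i j (C i j))"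
      using edge[OF \<open>E a b\<close> \<open>d a b \<noteq> 0\<close>] ab by (auto simp: A_def)
  qed
  then show ?thesis
    unfolding energy_eq by (simp add: sum.distrib sum_distrib_left case_prod_beta)
qed

lemma flux_add_scaled:
  "flux L (\<lambda>i j. C i j + \<tau> * \<delta> i j) P i j = flux L C P i j + \<tau> * flux L \<delta> P i j"
  unfolding flux_def by (simp add: distrib_right add_divide_distrib mult.assoc)

lemma kirchhoff_add_divergence_free:
  assumes "kirchhoff V E L S C P" and "\<forall>i\<in>V. (\<Sum>j\<in>nbrs V E i. flux L \<delta> P i j) = 0"
  shows "kirchhoff V E L S (\<lambda>i j. C i j + \<tau> * \<delta> i j) P"
  using assms unfolding kirchhoff_def flux_add_scaled
  by (simp add: sum.distrib sum_distrib_left[symmetric])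

lemma flux_antisym:
  assumes "admissible_cond E C" "\<forall>i j. E i j \<longrightarrow> L i j = L j i" "E i j"
  shows "flux L C P j i = - flux L C P i j"
proof -
  have "C j i = C i j" "L j i = L i j"
    using assms unfolding admissible_cond_def by metis+
  then show ?thesis
    unfolding flux_def by (simp add: right_diff_distrib diff_divide_distrib)
qed

definition cycle_circulation :: "'v list \<Rightarrow> 'v \<Rightarrow> 'v \<Rightarrow> real" where
  "cycle_circulation vs i j =
     (\<Sum>k<length vs. (if vs ! k = i \<and> vs ! ((k + 1) mod length vs) = j then 1 else 0)
                    - (if vs ! k = j \<and> vs ! ((k + 1) mod length vs) = i then 1 else 0))"

lemma cycle_circulation_antisym: "cycle_circulation vs j i = - cycle_circulation vs i j"
  unfolding cycle_circulation_def by (simp add: sum_negf[symmetric])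

lemma cycle_circulation_nonzeroD:
  assumes "cycle_circulation vs i j \<noteq> 0"
  shows "\<exists>k<length vs. (vs ! k = i \<and> vs ! ((k + 1) mod length vs) = j)
                    \<or> (vs ! k = j \<and> vs ! ((k + 1) mod length vs) = i)"
proof (rule ccontr)
  assume none: "\<not> ?thesis"
  have "cycle_circulation vs i j = 0"
    unfolding cycle_circulation_def
  proof (intro sum.neutral ballI)
    fix k assume "k \<in> {..<length vs}"
    then have "\<not> (vs ! k = i \<and> vs ! ((k + 1) mod length vs) = j)"
      and "\<not> (vs ! k = j \<and> vs ! ((k + 1) mod length vs) = i)"
      using none by auto
    then show "(if vs ! k = i \<and> vs ! ((k + 1) mod length vs) = j then 1 else 0)
             - (if vs ! k = j \<and> vs ! ((k + 1) mod length vs) = i then 1 else 0) = (0::real)"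
      by (simp only: if_False)
  qed
  with assms show False by simp
qed

lemma sum_lessThan_rotate:
  fixes f :: "nat \<Rightarrow> 'a::comm_monoid_add"
  shows "(\<Sum>k<n. f ((k + 1) mod n)) = (\<Sum>k<n. f k)"
proof (cases n)
  case (Suc m)
  have "(\<Sum>k<Suc m. f ((k + 1) mod Suc m)) = (\<Sum>k<m. f (Suc k)) + f 0"
    by (simp add: sum.lessThan_Suc)
  also have "\<dots> = (\<Sum>k<Suc m. f k)"
    by (subst sum.lessThan_Suc_shift) (simp add: add.commute)
  finally show ?thesis using Suc by simp
qed simp

lemma cycle_circulation_divergence_free:
  assumes "simple_graph V E" and walk: "\<forall>k<length vs. E (vs ! k) (vs ! ((k + 1) mod length vs))"
  shows "(\<Sum>j\<in>nbrs V E i. cycle_circulation vs i j) = 0"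
proof -
  define n where "n = length vs"
  define succ where "succ k = vs ! ((k + 1) mod n)" for k
  have fin: "finite (nbrs V E i)"
    using assms(1) unfolding simple_graph_def nbrs_def by simp
  have step: "(\<Sum>j\<in>nbrs V E i. (if vs ! k = i \<and> succ k = j then 1 else 0)
                               - (if vs ! k = j \<and> succ k = i then 1 else 0))
      = (if vs ! k = i then 1 else 0) - (if succ k = i then 1 else (0::real))" if "k < n" for k
  proof -
    have "succ k \<in> nbrs V E (vs ! k)" "vs ! k \<in> nbrs V E (succ k)"
      using walk assms(1) that unfolding simple_graph_def nbrs_def succ_def n_def by auto
    then have "(\<Sum>j\<in>nbrs V E i. if vs ! k = i \<and> succ k = j then 1 else 0) = (if vs ! k = i then 1 else (0::real))"
      and "(\<Sum>j\<in>nbrs V E i. if vs ! k = j \<and> succ k = i then 1 else 0) = (if succ k = i then 1 else (0::real))"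
      using fin by (cases "vs ! k = i"; cases "succ k = i"; simp)+
    then show ?thesis
      by (simp add: sum_subtractf)
  qed
  have "(\<Sum>j\<in>nbrs V E i. cycle_circulation vs i j)
      = (\<Sum>k<n. \<Sum>j\<in>nbrs V E i. (if vs ! k = i \<and> succ k = j then 1 else 0)
                                 - (if vs ! k = j \<and> succ k = i then 1 else 0))"
    unfolding cycle_circulation_def n_def[symmetric] succ_def[symmetric] by (rule sum.swap)
  also have "\<dots> = (\<Sum>k<n. (if vs ! k = i then 1 else 0) - (if succ k = i then 1 else 0))"
    using step by (intro sum.cong) simp_all
  also have "\<dots> = 0"
    using sum_lessThan_rotate[of "\<lambda>k. if vs ! k = i then 1 else 0 :: real" n]
    unfolding sum_subtractf succ_def by simp
  finally show ?thesis .
qed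

lemma cycle_circulation_first_edge:
  assumes "distinct vs" and "length vs \<ge> 3"
  shows "cycle_circulation vs (vs ! 0) (vs ! 1) = 1"
proof -
  define n where "n = length vs"
  have idx: "vs ! k = vs ! m \<longleftrightarrow> k = m" if "k < n" "m < n" for k m
    using nth_eq_iff_index_eq[OF assms(1)] that unfolding n_def by blast
  have lt: "0 < n" "1 < n" "2 < n"
    using assms(2) unfolding n_def by auto
  have "vs ! 1 \<noteq> vs ! 0" "vs ! 2 \<noteq> vs ! 0"
    using idx[OF lt(2,1)] idx[OF lt(3,1)] by simp_all
  have "cycle_circulation vs (vs ! 0) (vs ! 1) = (\<Sum>k<n. if k = 0 then 1 else 0)"
    unfolding cycle_circulation_def n_def[symmetric]
  proof (rule sum.cong[OF refl])
    fix k assume "k \<in> {..<n}"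
    then have "vs ! k = vs ! 0 \<longleftrightarrow> k = 0" "vs ! k = vs ! 1 \<longleftrightarrow> k = 1"
      using idx lt by auto
    then show "(if vs ! k = vs ! 0 \<and> vs ! ((k + 1) mod n) = vs ! 1 then 1 else 0)
             - (if vs ! k = vs ! 1 \<and> vs ! ((k + 1) mod n) = vs ! 0 then 1 else 0)
           = (if k = 0 then 1 else (0::real))"
      using assms(2) \<open>vs ! 1 \<noteq> vs ! 0\<close> \<open>vs ! 2 \<noteq> vs ! 0\<close> by (auto simp: n_def numeral_2_eq_2)
  qed
  also have "\<dots> = 1"
    using lt by simp
  finally show ?thesis .
qed

lemma divergence_free_perturbation_lowers_energy:
  fixes V :: "('v::linorder) set"
  assumes graph: "simple_graph V E" and L_pos: "\<forall>i j. E i j \<longrightarrow> L i j > 0"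
    and nu: "0 < \<nu>" and gamma: "0 < \<gamma>" "\<gamma> < 1"
    and C_adm: "admissible_cond E C" and P_kirch: "kirchhoff V E L S C P"
    and \<delta>_sym: "\<forall>i j. E i j \<longrightarrow> \<delta> j i = \<delta> i j"
    and \<delta>_supp: "\<forall>i j. \<delta> i j \<noteq> 0 \<longrightarrow> E i j \<and> 0 < C i j"
    and \<delta>_div: "\<forall>i\<in>V. (\<Sum>j\<in>nbrs V E i. flux L \<delta> P i j) = 0"
    and "\<delta> a b \<noteq> 0"
  shows "\<exists>C'. admissible_cond E C' \<and> kirchhoff V E L S C' P
              \<and> energy V E L \<nu> \<gamma> C' P < energy V E L \<nu> \<gamma> C P"
proof -
  have "finite V" and EV: "\<And>i j. E i j \<Longrightarrow> i \<in> V \<and> j \<in> V \<and> i \<noteq> j \<and> E j i"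
    using graph unfolding simple_graph_def by auto
  obtain t where "0 < t" and "\<forall>x\<in>V \<times> V. case_prod \<delta> x \<noteq> 0 \<longrightarrow> t * \<bar>case_prod \<delta> x\<bar> < case_prod C x"
    using finite_ex_pos_scale_below[of "V \<times> V" "case_prod \<delta>" "case_prod C"] \<open>finite V\<close> \<delta>_supp by auto
  then have small: "\<bar>t * \<delta> i j\<bar> < C i j" if "\<delta> i j \<noteq> 0" for i j
    using that \<delta>_supp EV by (force simp: abs_mult)
  define C' where "C' \<tau> i j = C i j + \<tau> * \<delta> i j" for \<tau> i j
  have adm: "admissible_cond E (C' \<tau>)" if "\<bar>\<tau>\<bar> = t" for \<tau>
    unfolding admissible_cond_def
  proof (intro allI impI conjI)
    fix i j assume "E i j"
    have "0 \<le> C i j" "C j i = C i j"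
      using C_adm \<open>E i j\<close> unfolding admissible_cond_def by metis+
    moreover have "\<bar>\<tau> * \<delta> i j\<bar> < C i j" if "\<delta> i j \<noteq> 0"
      using small[OF that] \<open>\<bar>\<tau>\<bar> = t\<close> \<open>0 < t\<close> by (simp add: abs_mult)
    ultimately show "0 \<le> C' \<tau> i j" and "C' \<tau> i j = C' \<tau> j i"
      unfolding C'_def using \<delta>_sym \<open>E i j\<close> by (fastforce, simp)
  qed
  have kir: "kirchhoff V E L S (C' \<tau>) P" for \<tau>
    unfolding C'_def using kirchhoff_add_divergence_free[OF P_kirch \<delta>_div] .
  obtain a' b' where "E a' b'" "a' \<in> V" "b' \<in> V" "a' < b'" "\<delta> a' b' \<noteq> 0"
  proof -
    have "E a b" "a \<noteq> b" "\<delta> b a = \<delta> a b"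
      using \<delta>_supp \<delta>_sym EV \<open>\<delta> a b \<noteq> 0\<close> by auto
    then show thesis
      using that[of a b] that[of b a] EV \<open>\<delta> a b \<noteq> 0\<close> by (auto simp: neq_iff)
  qed
  then have "energy V E L \<nu> \<gamma> (\<lambda>i j. C i j + t * \<delta> i j) P
      + energy V E L \<nu> \<gamma> (\<lambda>i j. C i j - t * \<delta> i j) P < 2 * energy V E L \<nu> \<gamma> C P"
    using \<open>0 < t\<close> small by (intro energy_strict_midpoint_concave[OF \<open>finite V\<close> L_pos nu gamma]) auto
  then have "energy V E L \<nu> \<gamma> (C' t) P + energy V E L \<nu> \<gamma> (C' (-t)) P < 2 * energy V E L \<nu> \<gamma> C P"
    unfolding C'_def by simp
  then have "energy V E L \<nu> \<gamma> (C' t) P < energy V E L \<nu> \<gamma> C P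
      \<or> energy V E L \<nu> \<gamma> (C' (-t)) P < energy V E L \<nu> \<gamma> C P"
    by linarith
  then show ?thesis
    using adm[of t] adm[of "-t"] kir \<open>0 < t\<close> by auto
qed

lemma cycle_circulation_support:
  assumes graph: "simple_graph V E" and C_adm: "admissible_cond E C"
    and L_sym: "\<forall>i j. E i j \<longrightarrow> L i j = L j i"
    and walk: "\<forall>k<length vs. E (vs ! k) (vs ! ((k + 1) mod length vs))"
    and flows: "\<forall>k<length vs. flux L C P (vs ! k) (vs ! ((k + 1) mod length vs)) \<noteq> 0"
    and "cycle_circulation vs i j \<noteq> 0"
  shows "E i j \<and> flux L C P i j \<noteq> 0"
proof -
  obtain k where "k < length vs"
    and "(vs ! k = i \<and> vs ! ((k + 1) mod length vs) = j) \<or> (vs ! k = j \<and> vs ! ((k + 1) mod length vs) = i)"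
    using cycle_circulation_nonzeroD[OF \<open>cycle_circulation vs i j \<noteq> 0\<close>] by blast
  then consider "E i j" "flux L C P i j \<noteq> 0" | "E j i" "flux L C P j i \<noteq> 0"
    using walk flows by blast
  then show ?thesis
  proof cases
    case 1
    then show ?thesis by simp
  next
    case 2
    then show ?thesis
      using graph flux_antisym[OF C_adm L_sym \<open>E j i\<close>] unfolding simple_graph_def by auto
  qed
qed

lemma nonzero_flux_cycle_admits_perturbation:
  assumes graph: "simple_graph V E" and L_pos: "\<forall>i j. E i j \<longrightarrow> L i j > 0"
    and L_sym: "\<forall>i j. E i j \<longrightarrow> L i j = L j i" and C_adm: "admissible_cond E C"
    and cyc: "is_cycle E vs"
    and flows: "\<forall>k<length vs. flux L C P (vs ! k) (vs ! ((k + 1) mod length vs)) \<noteq> 0"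
  shows "\<exists>\<delta>. (\<forall>i j. E i j \<longrightarrow> \<delta> j i = \<delta> i j) \<and> (\<forall>i j. \<delta> i j \<noteq> 0 \<longrightarrow> E i j \<and> 0 < C i j)
           \<and> (\<forall>i\<in>V. (\<Sum>j\<in>nbrs V E i. flux L \<delta> P i j) = 0) \<and> \<delta> (vs ! 0) (vs ! 1) \<noteq> 0"
proof -
  define D where "D = cycle_circulation vs"
  define \<delta> where "\<delta> i j = D i j * L i j / (P i - P j)" for i j
  have walk: "\<forall>k<length vs. E (vs ! k) (vs ! ((k + 1) mod length vs))"
    using cyc unfolding is_cycle_def by blast
  have supp: "E i j \<and> 0 < C i j \<and> P i \<noteq> P j \<and> 0 < L i j" if "D i j \<noteq> 0" for i j
  proof -
    have "E i j" "flux L C P i j \<noteq> 0"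
      using cycle_circulation_support[OF graph C_adm L_sym walk flows] that unfolding D_def by auto
    moreover have "0 \<le> C i j"
      using C_adm \<open>E i j\<close> unfolding admissible_cond_def by blast
    ultimately show ?thesis
      using L_pos unfolding flux_def by force
  qed
  have flux_\<delta>: "flux L \<delta> P i j = D i j" for i j
    using supp[of i j] unfolding flux_def \<delta>_def by (cases "D i j = 0") auto
  have "\<delta> j i = \<delta> i j" if "E i j" for i j
  proof -
    have "L j i = L i j"
      using L_sym that by metis
    then show ?thesis
      unfolding \<delta>_def D_def cycle_circulation_antisym[of vs j i] by (simp add: minus_divide_right)
  qed
  moreover have "\<delta> i j \<noteq> 0 \<longrightarrow> E i j \<and> 0 < C i j" for i j
    using supp unfolding \<delta>_def by fastforce
  moreover have "(\<Sum>j\<in>nbrs V E i. flux L \<delta> P i j) = 0" for i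
    unfolding flux_\<delta> D_def using cycle_circulation_divergence_free[OF graph walk] .
  moreover have "\<delta> (vs ! 0) (vs ! 1) \<noteq> 0"
    using cycle_circulation_first_edge[of vs] cyc supp[of "vs ! 0" "vs ! 1"]
    unfolding is_cycle_def \<delta>_def D_def by auto
  ultimately show ?thesis
    by blast
qed

theorem theorem2p2:
  fixes V :: "('v::linorder) set" and E :: "'v \<Rightarrow> 'v \<Rightarrow> bool"
    and L :: "'v \<Rightarrow> 'v \<Rightarrow> real" and S :: "'v \<Rightarrow> real" and \<nu> \<gamma> :: real
    and C :: "'v \<Rightarrow> 'v \<Rightarrow> real" and P :: "'v \<Rightarrow> real"
  assumes graph: "simple_graph V E" and conn: "connected_graph V E"
    and L_pos: "\<forall>i j. E i j \<longrightarrow> L i j > 0" and L_sym: "\<forall>i j. E i j \<longrightarrow> L i j = L j i"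
    and S_sum: "(\<Sum>i\<in>V. S i) = 0"
    and nu: "\<nu> > 0" and gamma: "0 < \<gamma>" "\<gamma> < 1"
    and C_adm: "admissible_cond E C" and P_kirch: "kirchhoff V E L S C P"
    and C_min: "\<forall>C' P'. admissible_cond E C' \<and> kirchhoff V E L S C' P' \<longrightarrow>
                   energy V E L \<nu> \<gamma> C P \<le> energy V E L \<nu> \<gamma> C' P'"
  shows "\<not> (\<exists>vs. is_cycle E vs \<and>
            (\<forall>k < length vs. flux L C P (vs ! k) (vs ! ((k + 1) mod length vs)) \<noteq> 0))"
proof
  \<comment> \<open>conn and S_sum only guarantee that the Kirchhoff system is solvable.\<close>
  assume "\<exists>vs. is_cycle E vs \<and>
            (\<forall>k < length vs. flux L C P (vs ! k) (vs ! ((k + 1) mod length vs)) \<noteq> 0)"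
  then obtain \<delta> a b where "\<forall>i j. E i j \<longrightarrow> \<delta> j i = \<delta> i j" "\<forall>i j. \<delta> i j \<noteq> 0 \<longrightarrow> E i j \<and> 0 < C i j"
      "\<forall>i\<in>V. (\<Sum>j\<in>nbrs V E i. flux L \<delta> P i j) = 0" "\<delta> a b \<noteq> 0"
    using nonzero_flux_cycle_admits_perturbation[OF graph L_pos L_sym C_adm] by blast
  then obtain C' where "admissible_cond E C'" "kirchhoff V E L S C' P"
      "energy V E L \<nu> \<gamma> C' P < energy V E L \<nu> \<gamma> C P"
    using divergence_free_perturbation_lowers_energy[OF graph L_pos nu gamma C_adm P_kirch] by blast
  then show False
    using C_min by fastforce
qed

end
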